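(* Every finite group with nonabelian monolith is strongly verbally closed. Moreover, every such group $H$ is a retract of every finite group $G$ that contains $H$ and satisfies all identities of $H$.
   Context: The monolith of a group is the intersection of all its nonidentity normal subgroups. A subgroup $H$ of $G$ is a retract of $G$ if there is an endomorphism $\rho$ of $G$ with $\rho\circ\rho=\rho$ and $\rho(G)=H$. A subgroup $H$ of $G$ is verbally closed if every equation $w(x_1,\dots,x_n)=h$ with $w$ in a free group and $h\in H$ solvable in $G$ is solvable in $H$; algebraically closed if every finite system of equations with coefficients from $H$ solvable in $G$ is solvable in $H$. A group is strongly verbally closed if it is algebraically closed in every group containing it as a verbally closed subgroup. *)

theory Defs
  imports "HOL-Algebra.Algebra"
begin

text \<open>Letters of words over variables x_0, x_1, ... (index, exponent sign: True = +1,
  False = -1) possibly with constants (coefficients) from the group.\<close>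
datatype 'a letter = Var nat bool | Cst 'a

text \<open>Elements of the free group on x_0, x_1, ... are represented by (not necessarily
  reduced) group words; their value under an assignment does not depend on the
  representative.\<close>
type_synonym fword = "(nat \<times> bool) list"

fun eval_letter :: "('a, 'm) monoid_scheme \<Rightarrow> (nat \<Rightarrow> 'a) \<Rightarrow> 'a letter \<Rightarrow> 'a" where
  "eval_letter G f (Var i b) = (if b then f i else inv\<^bsub>G\<^esub> (f i))"
| "eval_letter G f (Cst c) = c"

definition eval_word :: "('a, 'm) monoid_scheme \<Rightarrow> (nat \<Rightarrow> 'a) \<Rightarrow> 'a letter list \<Rightarrow> 'a" where
  "eval_word G f w = foldr (\<lambda>l acc. eval_letter G f l \<otimes>\<^bsub>G\<^esub> acc) w \<one>\<^bsub>G\<^esub>"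

definition fword_letters :: "fword \<Rightarrow> 'a letter list" where
  "fword_letters w = map (\<lambda>(i, b). Var i b) w"

definition eval_fword :: "('a, 'm) monoid_scheme \<Rightarrow> (nat \<Rightarrow> 'a) \<Rightarrow> fword \<Rightarrow> 'a" where
  "eval_fword G f w = eval_word G f (fword_letters w)"

definition consts_of :: "'a letter list \<Rightarrow> 'a set" where
  "consts_of w = {c. Cst c \<in> set w}"

abbreviation subgrp :: "('a, 'm) monoid_scheme \<Rightarrow> 'a set \<Rightarrow> ('a, 'm) monoid_scheme" where
  "subgrp G H \<equiv> G\<lparr>carrier := H\<rparr>"

definition monolith :: "('a, 'm) monoid_scheme \<Rightarrow> 'a set" where
  "monolith G = carrier G \<inter> \<Inter> {N. N \<lhd> G \<and> N \<noteq> {\<one>\<^bsub>G\<^esub>}}"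

definition nonabelian_set :: "('a, 'm) monoid_scheme \<Rightarrow> 'a set \<Rightarrow> bool" where
  "nonabelian_set G A \<longleftrightarrow> (\<exists>x\<in>A. \<exists>y\<in>A. x \<otimes>\<^bsub>G\<^esub> y \<noteq> y \<otimes>\<^bsub>G\<^esub> x)"

definition verbally_closed :: "'a set \<Rightarrow> ('a, 'm) monoid_scheme \<Rightarrow> bool" where
  "verbally_closed H G \<longleftrightarrow>
     (\<forall>(w::fword) h. h \<in> H \<longrightarrow>
        (\<exists>f. (\<forall>i. f i \<in> carrier G) \<and> eval_fword G f w = h) \<longrightarrow>
        (\<exists>f. (\<forall>i. f i \<in> H) \<and> eval_fword G f w = h))"

definition algebraically_closed :: "'a set \<Rightarrow> ('a, 'm) monoid_scheme \<Rightarrow> bool" where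
  "algebraically_closed H G \<longleftrightarrow>
     (\<forall>S :: 'a letter list list. (\<forall>w\<in>set S. consts_of w \<subseteq> H) \<longrightarrow>
        (\<exists>f. (\<forall>i. f i \<in> carrier G) \<and> (\<forall>w\<in>set S. eval_word G f w = \<one>\<^bsub>G\<^esub>)) \<longrightarrow>
        (\<exists>f. (\<forall>i. f i \<in> H) \<and> (\<forall>w\<in>set S. eval_word G f w = \<one>\<^bsub>G\<^esub>)))"

definition satisfies_identities_of :: "('a, 'm) monoid_scheme \<Rightarrow> ('a, 'n) monoid_scheme \<Rightarrow> bool" where
  "satisfies_identities_of G K \<longleftrightarrow>
     (\<forall>w::fword. (\<forall>f. (\<forall>i. f i \<in> carrier K) \<longrightarrow> eval_fword K f w = \<one>\<^bsub>K\<^esub>) \<longrightarrow>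
        (\<forall>f. (\<forall>i. f i \<in> carrier G) \<longrightarrow> eval_fword G f w = \<one>\<^bsub>G\<^esub>))"

definition retract :: "'a set \<Rightarrow> ('a, 'm) monoid_scheme \<Rightarrow> bool" where
  "retract H G \<longleftrightarrow>
     (\<exists>\<rho> \<in> hom G G. (\<forall>x\<in>carrier G. \<rho> (\<rho> x) = \<rho> x) \<and> \<rho> ` carrier G = H)"

end

theory Submission
  imports Defs
begin

text \<open>
  Let \<open>e\<close> assign values in \<open>G\<close> to the first \<open>N\<close> variables so that every element of \<open>H\<close>
  occurs, and suppose that a law of \<open>H\<close> whose value at \<open>e\<close> lies in \<open>H\<close> takes the value \<open>1\<close>
  there (verbal closedness gives this, and so does \<open>G\<close> satisfying the identities of \<open>H\<close>).
  For a set \<open>S\<close> of \<open>H\<close>-valued assignments, the values at \<open>e\<close> of the words that vanish on \<open>S\<close>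
  and have value in \<open>H\<close> form a normal subgroup of \<open>H\<close>. If it were nontrivial for every single
  assignment, it would always contain the monolith; as the monolith is nonabelian, commutators
  then show the same for the finite set of all \<open>H\<close>-assignments, so some law of \<open>H\<close> would have
  a nontrivial value at \<open>e\<close>. Hence some \<open>a\<close> separates: \<open>w(a) = 1\<close> and \<open>w(e) \<in> H\<close> force
  \<open>w(e) = 1\<close>. Then \<open>w(a) \<mapsto> w(e)\<close> is a homomorphism from a subgroup of \<open>H\<close> onto the finite group
  \<open>H\<close>, hence an endomorphism \<open>g\<close> of \<open>H\<close>, and \<open>g \<circ> a\<close> is an \<open>H\<close>-valued point that agrees with \<open>e\<close>
  on \<open>H\<close> and satisfies every relation of \<open>e\<close>. Letting \<open>e\<close> extend a solution of a system of
  equations by an enumeration of \<open>H\<close> yields a solution in \<open>H\<close>; letting \<open>e\<close> enumerate a finite \<open>G\<close>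
  yields a retraction onto \<open>H\<close>.
\<close>

definition fword_inv :: "fword \<Rightarrow> fword" where
  "fword_inv w = rev (map (\<lambda>(i, b). (i, \<not> b)) w)"

definition fword_commutator :: "fword \<Rightarrow> fword \<Rightarrow> fword" where
  "fword_commutator u v = u @ v @ fword_inv u @ fword_inv v"

lemma fword_inv_in_lists_iff [simp]:
  "fword_inv w \<in> lists (A \<times> UNIV) \<longleftrightarrow> w \<in> lists (A \<times> UNIV)"
  unfolding fword_inv_def by auto

lemma fword_commutator_in_lists_iff [simp]:
  "fword_commutator u v \<in> lists (A \<times> UNIV) \<longleftrightarrow> u \<in> lists (A \<times> UNIV) \<and> v \<in> lists (A \<times> UNIV)"
  unfolding fword_commutator_def by auto

lemma eval_fword_Nil [simp]: "eval_fword G f [] = \<one>\<^bsub>G\<^esub>"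
  by (simp add: eval_fword_def eval_word_def fword_letters_def)

lemma eval_fword_Cons [simp]:
  "eval_fword G f ((i, b) # w) = (if b then f i else inv\<^bsub>G\<^esub> f i) \<otimes>\<^bsub>G\<^esub> eval_fword G f w"
  by (simp add: eval_fword_def eval_word_def fword_letters_def)

lemma eval_word_Nil [simp]: "eval_word G f [] = \<one>\<^bsub>G\<^esub>"
  by (simp add: eval_word_def)

lemma eval_word_Cons [simp]: "eval_word G f (l # w) = eval_letter G f l \<otimes>\<^bsub>G\<^esub> eval_word G f w"
  by (simp add: eval_word_def)

lemma eval_word_cong:
  "(\<And>i b. Var i b \<in> set w \<Longrightarrow> f i = g i) \<Longrightarrow> eval_word G f w = eval_word G g w"
proof (induction w)
  case (Cons l w)
  then show ?case by (cases l) (simp_all, metis list.set_intros)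
qed simp

lemma eval_fword_cong:
  "(\<And>i b. (i, b) \<in> set w \<Longrightarrow> f i = g i) \<Longrightarrow> eval_fword G f w = eval_fword G g w"
proof (induction w)
  case (Cons p w)
  then show ?case by (cases p) (simp, metis list.set_intros)
qed simp

fun var_of_letter :: "('a \<Rightarrow> nat) \<Rightarrow> 'a letter \<Rightarrow> nat \<times> bool" where
  "var_of_letter idx (Var i b) = (i, b)"
| "var_of_letter idx (Cst c) = (idx c, True)"

lemma eval_word_eq_eval_fword:
  "(\<And>c. c \<in> consts_of w \<Longrightarrow> f (idx c) = c) \<Longrightarrow>
    eval_word G f w = eval_fword G f (map (var_of_letter idx) w)"
proof (induction w)
  case (Cons l w)
  then show ?case by (cases l) (auto simp: consts_of_def)
qed simp

lemma letter_vars_bounded: "\<exists>n. \<forall>w\<in>set S. \<forall>i b. Var i b \<in> set w \<longrightarrow> i < n"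
proof -
  have "{i. \<exists>w\<in>set S. \<exists>b. Var i b \<in> set w}
      \<subseteq> (fst \<circ> var_of_letter (\<lambda>_. 0)) ` (\<Union>w\<in>set S. set w)"
  proof clarify
    fix i w b assume "w \<in> set S" "Var i b \<in> set w"
    then show "i \<in> (fst \<circ> var_of_letter (\<lambda>_. 0)) ` (\<Union>w\<in>set S. set w)"
      by (intro rev_image_eqI[of "Var i b"]) auto
  qed
  then have "finite {i. \<exists>w\<in>set S. \<exists>b. Var i b \<in> set w}"
    by (rule finite_subset) simp
  then show ?thesis
    unfolding finite_nat_set_iff_bounded by blast
qed

context group
begin

lemma eval_fword_closed [simp]: "range f \<subseteq> carrier G \<Longrightarrow> eval_fword G f w \<in> carrier G"
  by (induction w) (auto simp: image_subset_iff)

lemma eval_fword_append [simp]: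
  "range f \<subseteq> carrier G \<Longrightarrow> eval_fword G f (u @ v) = eval_fword G f u \<otimes> eval_fword G f v"
  by (induction u) (auto simp: image_subset_iff m_assoc)

lemma eval_fword_inv [simp]:
  assumes "range f \<subseteq> carrier G"
  shows "eval_fword G f (fword_inv w) = inv (eval_fword G f w)"
proof (induction w)
  case (Cons p w)
  then show ?case
    using assms by (cases p) (auto simp: fword_inv_def image_subset_iff inv_mult_group)
qed (simp add: fword_inv_def)

lemma eval_fword_commutator:
  "range f \<subseteq> carrier G \<Longrightarrow> eval_fword G f (fword_commutator u v)
     = eval_fword G f u \<otimes> eval_fword G f v \<otimes> inv (eval_fword G f u) \<otimes> inv (eval_fword G f v)"
  by (simp add: fword_commutator_def m_assoc)

lemma eval_fword_in_subgroup:
  "subgroup H G \<Longrightarrow> range f \<subseteq> H \<Longrightarrow> eval_fword G f w \<in> H"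
  by (induction w) (auto simp: image_subset_iff subgroup.m_closed subgroup.m_inv_closed subgroup.one_closed)

lemma eval_fword_subgroup:
  assumes "subgroup H G" "range f \<subseteq> H"
  shows "eval_fword (G\<lparr>carrier := H\<rparr>) f w = eval_fword G f w"
  using assms by (induction w) (auto simp: image_subset_iff)

lemma commutator_eq_one_iff:
  "x \<in> carrier G \<Longrightarrow> y \<in> carrier G \<Longrightarrow> x \<otimes> y \<otimes> inv x \<otimes> inv y = \<one> \<longleftrightarrow> x \<otimes> y = y \<otimes> x"
  by (simp add: inv_solve_right')

lemma eval_fword_product_relation:
  assumes "range f \<subseteq> carrier G"
  shows "eval_fword G f [(i, True), (j, True), (k, False)] = \<one> \<longleftrightarrow> f k = f i \<otimes> f j"
proof -
  have "eval_fword G f [(i, True), (j, True), (k, False)] = f i \<otimes> f j \<otimes> inv (f k)"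
    using assms by (simp add: image_subset_iff m_assoc)
  then show ?thesis
    using assms inv_solve_right'[of \<one> "f i \<otimes> f j" "f k"] by (auto simp: image_subset_iff)
qed

end

lemma (in group_hom) hom_eval_fword:
  "range f \<subseteq> carrier G \<Longrightarrow> h (eval_fword G f w) = eval_fword H (h \<circ> f) w"
  by (induction w) (auto simp: image_subset_iff)

lemma monolith_subset_normal:
  "N \<lhd> K \<Longrightarrow> N \<noteq> {\<one>\<^bsub>K\<^esub>} \<Longrightarrow> monolith K \<subseteq> N"
  unfolding monolith_def by auto

lemma (in group) normal_in_subgroupI:
  assumes "subgroup H G" "J \<subseteq> H" "\<one> \<in> J"
    and "\<And>x y. x \<in> J \<Longrightarrow> y \<in> J \<Longrightarrow> x \<otimes> y \<in> J"
    and "\<And>x. x \<in> J \<Longrightarrow> inv x \<in> J"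
    and "\<And>g x. g \<in> H \<Longrightarrow> x \<in> J \<Longrightarrow> g \<otimes> x \<otimes> inv g \<in> J"
  shows "J \<lhd> G\<lparr>carrier := H\<rparr>"
proof -
  interpret K: group "G\<lparr>carrier := H\<rparr>"
    using assms(1) by (rule subgroup_imp_group)
  have "subgroup J G"
    using assms subgroup.subset[OF assms(1)] by (intro subgroupI) auto
  then have "subgroup J (G\<lparr>carrier := H\<rparr>)"
    using assms(1,2) by (rule subgroup_incl)
  then show ?thesis
    using assms(1,6) by (auto simp: K.normal_inv_iff)
qed

locale covered_subgroup = group G for G (structure) +
  fixes H :: "'a set" and e :: "nat \<Rightarrow> 'a" and N :: nat
  assumes subgroup_H: "subgroup H G"
    and e_closed: "range e \<subseteq> carrier G"
    and H_covered: "H \<subseteq> e ` {..<N}"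
begin

abbreviation words :: "fword set" where
  "words \<equiv> lists ({..<N} \<times> UNIV)"

abbreviation monolith_H :: "'a set" where
  "monolith_H \<equiv> monolith (G\<lparr>carrier := H\<rparr>)"

lemma H_subset_carrier: "H \<subseteq> carrier G"
  using subgroup_H by (rule subgroup.subset)

lemma finite_H: "finite H"
  using H_covered finite_surj by blast

definition laws_vanish_at_e :: bool where
  "laws_vanish_at_e \<longleftrightarrow> (\<forall>w. eval_fword G e w \<in> H \<longrightarrow>
     (\<forall>b. range b \<subseteq> H \<longrightarrow> eval_fword G b w = \<one>) \<longrightarrow> eval_fword G e w = \<one>)"

lemma laws_vanish_at_e_if_verbally_closed:
  assumes "verbally_closed H G"
  shows laws_vanish_at_e
  unfolding laws_vanish_at_e_def
proof (intro allI impI)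
  fix w assume "eval_fword G e w \<in> H" and law: "\<forall>b. range b \<subseteq> H \<longrightarrow> eval_fword G b w = \<one>"
  moreover have "\<forall>i. e i \<in> carrier G"
    using e_closed by blast
  ultimately obtain f where f: "\<forall>i. f i \<in> H" "eval_fword G f w = eval_fword G e w"
    using assms unfolding verbally_closed_def by blast
  then have "eval_fword G f w = \<one>"
    using law by blast
  with f(2) show "eval_fword G e w = \<one>"
    by simp
qed

lemma laws_vanish_at_e_if_satisfies_identities:
  assumes "satisfies_identities_of G (G\<lparr>carrier := H\<rparr>)"
  shows laws_vanish_at_e
  unfolding laws_vanish_at_e_def
proof (intro allI impI)
  fix w assume law: "\<forall>b. range b \<subseteq> H \<longrightarrow> eval_fword G b w = \<one>"
  have "\<forall>f. (\<forall>i. f i \<in> carrier (G\<lparr>carrier := H\<rparr>)) \<longrightarrow>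
      eval_fword (G\<lparr>carrier := H\<rparr>) f w = \<one>\<^bsub>G\<lparr>carrier := H\<rparr>\<^esub>"
  proof (intro allI impI)
    fix f :: "nat \<Rightarrow> 'a" assume "\<forall>i. f i \<in> carrier (G\<lparr>carrier := H\<rparr>)"
    then have "range f \<subseteq> H"
      by auto
    then show "eval_fword (G\<lparr>carrier := H\<rparr>) f w = \<one>\<^bsub>G\<lparr>carrier := H\<rparr>\<^esub>"
      using law by (simp add: eval_fword_subgroup[OF subgroup_H])
  qed
  then have "\<forall>f. (\<forall>i. f i \<in> carrier G) \<longrightarrow> eval_fword G f w = \<one>"
    by (rule assms[unfolded satisfies_identities_of_def, THEN spec, THEN mp])
  then show "eval_fword G e w = \<one>"
    using e_closed by blast
qed

definition relators :: "(nat \<Rightarrow> 'a) set \<Rightarrow> fword set" where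
  "relators S = {w \<in> words. eval_fword G e w \<in> H \<and> (\<forall>a\<in>S. eval_fword G a w = \<one>)}"

lemma H_subset_relator_values: "H \<subseteq> eval_fword G e ` relators {}"
proof
  fix h assume "h \<in> H"
  then obtain i where "i < N" "h = e i"
    using H_covered by blast
  then show "h \<in> eval_fword G e ` relators {}"
    using \<open>h \<in> H\<close> e_closed
    by (intro image_eqI[of _ _ "[(i, True)]"]) (auto simp: relators_def image_subset_iff)
qed

lemma relator_values_normal:
  assumes "\<forall>a\<in>S. range a \<subseteq> carrier G"
  shows "eval_fword G e ` relators S \<lhd> G\<lparr>carrier := H\<rparr>"
proof (rule normal_in_subgroupI[OF subgroup_H])
  show "eval_fword G e ` relators S \<subseteq> H"
    unfolding relators_def by blast
  show "\<one> \<in> eval_fword G e ` relators S"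
    using subgroup.one_closed[OF subgroup_H]
    by (intro image_eqI[of _ _ "[]"]) (auto simp: relators_def)
next
  fix x y assume "x \<in> eval_fword G e ` relators S" "y \<in> eval_fword G e ` relators S"
  then obtain u v where "u \<in> relators S" "v \<in> relators S" "x = eval_fword G e u" "y = eval_fword G e v"
    by blast
  then show "x \<otimes> y \<in> eval_fword G e ` relators S"
    using assms e_closed
    by (intro image_eqI[of _ _ "u @ v"]) (auto simp: relators_def subgroup.m_closed[OF subgroup_H])
next
  fix x assume "x \<in> eval_fword G e ` relators S"
  then obtain u where "u \<in> relators S" "x = eval_fword G e u"
    by blast
  then show "inv x \<in> eval_fword G e ` relators S"
    using assms e_closed
    by (intro image_eqI[of _ _ "fword_inv u"]) (auto simp: relators_def subgroup.m_inv_closed[OF subgroup_H])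
next
  fix g x assume "g \<in> H" "x \<in> eval_fword G e ` relators S"
  then obtain i u where "i < N" "g = e i" "u \<in> relators S" "x = eval_fword G e u"
    using H_covered by blast
  then show "g \<otimes> x \<otimes> inv g \<in> eval_fword G e ` relators S"
    using assms e_closed \<open>g \<in> H\<close>
    by (intro image_eqI[of _ _ "(i, True) # u @ [(i, False)]"])
      (auto simp: relators_def image_subset_iff m_assoc subgroup.m_closed[OF subgroup_H]
        subgroup.m_inv_closed[OF subgroup_H])
qed

lemma commutator_in_relators:
  assumes "u \<in> relators S" "v \<in> relators T" "\<forall>a\<in>S \<union> T. range a \<subseteq> carrier G"
  shows "fword_commutator u v \<in> relators (S \<union> T)"
  using assms e_closed
  by (auto simp: relators_def eval_fword_commutator subgroup.m_closed[OF subgroup_H]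
      subgroup.m_inv_closed[OF subgroup_H])

lemma monolith_subset_relator_values:
  assumes nonabelian: "nonabelian_set G monolith_H"
    and "finite S" "\<forall>a\<in>S. range a \<subseteq> carrier G"
    and nontrivial: "\<And>a. a \<in> S \<Longrightarrow> eval_fword G e ` relators {a} \<noteq> {\<one>}"
  shows "monolith_H \<subseteq> eval_fword G e ` relators S"
  using assms(2-4)
proof (induction S rule: finite_induct)
  case empty
  show ?case
    using H_subset_relator_values unfolding monolith_def by auto
next
  case (insert a S)
  obtain m1 m2 where m: "m1 \<in> monolith_H" "m2 \<in> monolith_H" "m1 \<otimes> m2 \<noteq> m2 \<otimes> m1"
    using nonabelian unfolding nonabelian_set_def by blast
  have m_carrier: "m1 \<in> carrier G" "m2 \<in> carrier G"
    using m H_subset_carrier unfolding monolith_def by auto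
  obtain u where u: "u \<in> relators S" "eval_fword G e u = m1"
    using insert m by auto
  have "monolith_H \<subseteq> eval_fword G e ` relators {a}"
    using insert.prems by (intro monolith_subset_normal relator_values_normal) auto
  then obtain v where v: "v \<in> relators {a}" "eval_fword G e v = m2"
    using m by auto
  have "fword_commutator u v \<in> relators (insert a S)"
    using commutator_in_relators[OF u(1) v(1)] insert.prems by (simp add: Un_commute)
  moreover have "eval_fword G e (fword_commutator u v) \<noteq> \<one>"
    using u v m m_carrier e_closed by (simp add: eval_fword_commutator commutator_eq_one_iff)
  ultimately show ?case
    using insert.prems by (intro monolith_subset_normal relator_values_normal) auto
qed

definition separating :: "(nat \<Rightarrow> 'a) \<Rightarrow> bool" where
  "separating a \<longleftrightarrow> range a \<subseteq> H \<and> (\<forall>w\<in>relators {a}. eval_fword G e w = \<one>)"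

lemma exists_separating:
  assumes nonabelian: "nonabelian_set G monolith_H" and laws: laws_vanish_at_e
  shows "\<exists>a. separating a"
proof (rule ccontr)
  assume "\<nexists>a. separating a"
  then have nontrivial: "\<And>a. range a \<subseteq> H \<Longrightarrow> eval_fword G e ` relators {a} \<noteq> {\<one>}"
    unfolding separating_def by blast
  define A where "A = {a. \<forall>i. (i \<in> {..<N} \<longrightarrow> a i \<in> H) \<and> (i \<notin> {..<N} \<longrightarrow> a i = \<one>)}"
  have A_H: "range a \<subseteq> H" if "a \<in> A" for a
  proof -
    have "a i \<in> H" for i
      using that subgroup.one_closed[OF subgroup_H] unfolding A_def by (cases "i < N") auto
    then show ?thesis
      by blast
  qed
  have "finite A"
    unfolding A_def using finite_H by (intro finite_set_of_finite_funs) auto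
  then have "monolith_H \<subseteq> eval_fword G e ` relators A"
    using A_H H_subset_carrier nontrivial
    by (intro monolith_subset_relator_values[OF nonabelian]) auto
  moreover obtain m1 m2 where m: "m1 \<in> monolith_H" "m2 \<in> monolith_H" "m1 \<otimes> m2 \<noteq> m2 \<otimes> m1"
    using nonabelian unfolding nonabelian_set_def by blast
  ultimately obtain w where w: "w \<in> relators A" "eval_fword G e w = m1"
    by blast
  have "m1 \<noteq> \<one>"
    using m H_subset_carrier unfolding monolith_def by auto
  then obtain b where b: "range b \<subseteq> H" "eval_fword G b w \<noteq> \<one>"
    using laws w unfolding laws_vanish_at_e_def relators_def by blast
  define b' where "b' i = (if i < N then b i else \<one>)" for i
  have "b' \<in> A"
    using b(1) unfolding A_def b'_def by auto
  moreover have "eval_fword G b' w = eval_fword G b w"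
    using w(1) unfolding relators_def b'_def by (intro eval_fword_cong) auto
  ultimately show False
    using w(1) b(2) unfolding relators_def by auto
qed

lemma separating_eval_eq:
  assumes "separating a" "u \<in> relators {}" "v \<in> relators {}"
    and "eval_fword G a u = eval_fword G a v"
  shows "eval_fword G e u = eval_fword G e v"
proof -
  have "range a \<subseteq> carrier G"
    using assms(1) H_subset_carrier unfolding separating_def by blast
  then have "u @ fword_inv v \<in> relators {a}"
    using assms(2-4) e_closed
    by (auto simp: relators_def subgroup.m_closed[OF subgroup_H] subgroup.m_inv_closed[OF subgroup_H])
  then have "eval_fword G e (u @ fword_inv v) = \<one>"
    using assms(1) unfolding separating_def by blast
  then show ?thesis
    using e_closed inv_solve_right'[of \<one> "eval_fword G e u" "eval_fword G e v"] by simp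
qed

definition transfer :: "(nat \<Rightarrow> 'a) \<Rightarrow> 'a \<Rightarrow> 'a" where
  "transfer a y = eval_fword G e (SOME w. w \<in> relators {} \<and> eval_fword G a w = y)"

lemma transfer_eval:
  assumes "separating a" "w \<in> relators {}"
  shows "transfer a (eval_fword G a w) = eval_fword G e w"
proof -
  have "\<exists>u. u \<in> relators {} \<and> eval_fword G a u = eval_fword G a w"
    using assms(2) by blast
  then show ?thesis
    unfolding transfer_def by (rule someI2_ex) (blast intro: separating_eval_eq[OF assms(1) _ assms(2)])
qed

text \<open>The values at a separating assignment form a subgroup of \<open>H\<close> that \<open>transfer\<close> maps onto
  the finite group \<open>H\<close>, so they exhaust \<open>H\<close>.\<close>

lemma separating_values:
  assumes "separating a"
  shows "eval_fword G a ` relators {} = H"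
proof (rule card_seteq[OF finite_H])
  show values_H: "eval_fword G a ` relators {} \<subseteq> H"
    using assms eval_fword_in_subgroup[OF subgroup_H] unfolding separating_def by blast
  have "H \<subseteq> transfer a ` eval_fword G a ` relators {}"
  proof
    fix h assume "h \<in> H"
    then obtain w where "w \<in> relators {}" "h = eval_fword G e w"
      using H_subset_relator_values by blast
    then show "h \<in> transfer a ` eval_fword G a ` relators {}"
      using transfer_eval[OF assms] by (intro image_eqI[of _ _ "eval_fword G a w"]) auto
  qed
  moreover have "finite (eval_fword G a ` relators {})"
    using values_H finite_H finite_subset by blast
  ultimately show "card H \<le> card (eval_fword G a ` relators {})"
    by (meson card_image_le card_mono finite_imageI le_trans)
qed

lemma transfer_hom:
  assumes "separating a"
  shows "transfer a \<in> hom (G\<lparr>carrier := H\<rparr>) (G\<lparr>carrier := H\<rparr>)"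
proof (rule homI)
  fix y assume "y \<in> carrier (G\<lparr>carrier := H\<rparr>)"
  then obtain u where "u \<in> relators {}" "y = eval_fword G a u"
    using separating_values[OF assms] by auto
  then show "transfer a y \<in> carrier (G\<lparr>carrier := H\<rparr>)"
    using transfer_eval[OF assms] unfolding relators_def by auto
next
  fix y z assume "y \<in> carrier (G\<lparr>carrier := H\<rparr>)" "z \<in> carrier (G\<lparr>carrier := H\<rparr>)"
  then have "y \<in> eval_fword G a ` relators {}" "z \<in> eval_fword G a ` relators {}"
    using separating_values[OF assms] by simp_all
  then obtain u v where uv: "u \<in> relators {}" "v \<in> relators {}"
    "y = eval_fword G a u" "z = eval_fword G a v"
    by blast
  then have "u @ v \<in> relators {}"
    using e_closed by (auto simp: relators_def subgroup.m_closed[OF subgroup_H])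
  moreover have "range a \<subseteq> carrier G"
    using assms H_subset_carrier unfolding separating_def by blast
  ultimately show "transfer a (y \<otimes>\<^bsub>G\<lparr>carrier := H\<rparr>\<^esub> z)
      = transfer a y \<otimes>\<^bsub>G\<lparr>carrier := H\<rparr>\<^esub> transfer a z"
    using transfer_eval[OF assms] uv e_closed by (simp flip: eval_fword_append)
qed

text \<open>The values of an \<open>H\<close>-specialization are the images of the generators \<open>e i\<close> under a
  homomorphism from \<open>\<langle>e 0, \<dots>, e (N - 1)\<rangle>\<close> to \<open>H\<close> that fixes \<open>H\<close>.\<close>

definition H_specialization :: "(nat \<Rightarrow> 'a) \<Rightarrow> bool" where
  "H_specialization a \<longleftrightarrow> range a \<subseteq> H \<and> (\<forall>i<N. e i \<in> H \<longrightarrow> a i = e i)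
     \<and> (\<forall>w\<in>words. eval_fword G e w = \<one> \<longrightarrow> eval_fword G a w = \<one>)"

lemma H_specializationD:
  assumes "H_specialization a"
  shows "range a \<subseteq> H" and "\<And>i. i < N \<Longrightarrow> e i \<in> H \<Longrightarrow> a i = e i"
    and "\<And>w. w \<in> words \<Longrightarrow> eval_fword G e w = \<one> \<Longrightarrow> eval_fword G a w = \<one>"
  using assms unfolding H_specialization_def by blast+

lemma exists_H_specialization:
  assumes "nonabelian_set G monolith_H" laws_vanish_at_e
  shows "\<exists>a. H_specialization a"
proof -
  obtain a where a: "separating a"
    using exists_separating[OF assms] by blast
  have a_H: "range a \<subseteq> H"
    using a unfolding separating_def by blast
  interpret K: group "G\<lparr>carrier := H\<rparr>"
    using subgroup_H by (rule subgroup_imp_group)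
  interpret g: group_hom "G\<lparr>carrier := H\<rparr>" "G\<lparr>carrier := H\<rparr>" "transfer a"
    using transfer_hom[OF a] by unfold_locales
  have "H_specialization (transfer a \<circ> a)"
    unfolding H_specialization_def
  proof (intro conjI allI ballI impI)
    show ga_H: "range (transfer a \<circ> a) \<subseteq> H"
      using a_H g.hom_closed by auto
  next
    fix i assume "i < N" "e i \<in> H"
    then have "[(i, True)] \<in> relators {}"
      using H_subset_carrier by (auto simp: relators_def)
    moreover have "eval_fword G a [(i, True)] = a i"
      using a_H H_subset_carrier by (simp add: image_subset_iff subset_iff)
    ultimately show "(transfer a \<circ> a) i = e i"
      using transfer_eval[OF a, of "[(i, True)]"] \<open>e i \<in> H\<close> H_subset_carrier by auto
  next
    fix w assume "w \<in> words" "eval_fword G e w = \<one>"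
    then have "w \<in> relators {}"
      using subgroup.one_closed[OF subgroup_H] by (simp add: relators_def)
    have "eval_fword G (transfer a \<circ> a) w = eval_fword (G\<lparr>carrier := H\<rparr>) (transfer a \<circ> a) w"
      using a_H g.hom_closed by (simp add: eval_fword_subgroup[OF subgroup_H] image_subset_iff)
    also have "\<dots> = transfer a (eval_fword (G\<lparr>carrier := H\<rparr>) a w)"
      using a_H by (simp add: g.hom_eval_fword)
    also have "\<dots> = eval_fword G e w"
      using a_H transfer_eval[OF a \<open>w \<in> relators {}\<close>] by (simp add: eval_fword_subgroup[OF subgroup_H])
    finally show "eval_fword G (transfer a \<circ> a) w = \<one>"
      using \<open>eval_fword G e w = \<one>\<close> by simp
  qed
  then show ?thesis
    by blast
qed

lemma eval_word_H_specialization: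
  assumes a: "H_specialization a"
    and w: "consts_of w \<subseteq> H" "\<And>i b. Var i b \<in> set w \<Longrightarrow> i < N" "eval_word G e w = \<one>"
  shows "eval_word G a w = \<one>"
proof -
  have "\<forall>c\<in>H. \<exists>i. i < N \<and> e i = c"
    using H_covered by blast
  from bchoice[OF this] obtain idx where idx: "\<And>c. c \<in> H \<Longrightarrow> idx c < N \<and> e (idx c) = c"
    by blast
  let ?t = "map (var_of_letter idx) w"
  have "var_of_letter idx l \<in> {..<N} \<times> UNIV" if "l \<in> set w" for l
  proof (cases l)
    case (Var i b)
    then show ?thesis
      using w(2)[of i b] that by simp
  next
    case (Cst c)
    then show ?thesis
      using idx[of c] w(1) that by (auto simp: consts_of_def)
  qed
  then have "?t \<in> words"
    unfolding in_lists_conv_set set_map by blast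
  moreover have "eval_fword G e ?t = \<one>"
    using idx w(1,3) by (subst eval_word_eq_eval_fword[symmetric]) auto
  ultimately have "eval_fword G a ?t = \<one>"
    by (rule H_specializationD(3)[OF a])
  moreover have "eval_word G a w = eval_fword G a ?t"
    using idx w(1) H_specializationD(2)[OF a] by (intro eval_word_eq_eval_fword) auto
  ultimately show ?thesis
    by simp
qed

lemma H_specialization_mult:
  assumes a: "H_specialization a" and "i < N" "j < N" "k < N" "e k = e i \<otimes> e j"
  shows "a k = a i \<otimes> a j"
proof -
  have "eval_fword G e [(i, True), (j, True), (k, False)] = \<one>"
    by (simp only: eval_fword_product_relation[OF e_closed]) (rule assms(5))
  then have "eval_fword G a [(i, True), (j, True), (k, False)] = \<one>"
    by (rule H_specializationD(3)[OF a, rotated]) (use assms(2-4) in simp)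
  moreover have "range a \<subseteq> carrier G"
    using H_specializationD(1)[OF a] H_subset_carrier by blast
  ultimately show ?thesis
    by (simp only: eval_fword_product_relation)
qed

lemma retract_H_specialization:
  assumes a: "H_specialization a" and G_covered: "carrier G \<subseteq> e ` {..<N}"
  shows "retract H G"
proof -
  have "\<forall>x\<in>carrier G. \<exists>i. i < N \<and> e i = x"
    using G_covered by blast
  from bchoice[OF this] obtain idx where idx: "\<And>x. x \<in> carrier G \<Longrightarrow> idx x < N \<and> e (idx x) = x"
    by blast
  note a_H = H_specializationD(1)[OF a]
  define \<rho> where "\<rho> x = a (idx x)" for x
  have \<rho>_H: "\<rho> x \<in> H" for x
    using a_H unfolding \<rho>_def by blast
  have \<rho>_id: "\<rho> h = h" if "h \<in> H" for h
  proof -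
    have "idx h < N" "e (idx h) = h"
      using that idx H_subset_carrier by auto
    then show ?thesis
      unfolding \<rho>_def using H_specializationD(2)[OF a] that by simp
  qed
  have "\<rho> \<in> hom G G"
  proof (rule homI)
    fix x y assume "x \<in> carrier G" "y \<in> carrier G"
    then show "\<rho> (x \<otimes> y) = \<rho> x \<otimes> \<rho> y"
      unfolding \<rho>_def using idx by (intro H_specialization_mult[OF a]) simp_all
  next
    show "\<rho> x \<in> carrier G" for x
      using \<rho>_H H_subset_carrier by blast
  qed
  moreover have "\<rho> ` carrier G = H"
    using \<rho>_H image_eqI[of _ \<rho>, OF \<rho>_id[symmetric]] H_subset_carrier by blast
  ultimately show ?thesis
    unfolding retract_def using \<rho>_H \<rho>_id by blast
qed

end

context group
begin

lemma algebraically_closed_if_verbally_closed: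
  assumes "subgroup H G" "finite H"
    and nonabelian: "nonabelian_set G (monolith (G\<lparr>carrier := H\<rparr>))"
    and verbal: "verbally_closed H G"
  shows "algebraically_closed H G"
  unfolding algebraically_closed_def
proof (intro allI impI)
  fix S :: "'a letter list list"
  assume coefficients: "\<forall>w\<in>set S. consts_of w \<subseteq> H"
    and "\<exists>f. (\<forall>i. f i \<in> carrier G) \<and> (\<forall>w\<in>set S. eval_word G f w = \<one>)"
  then obtain s where s: "\<forall>i. s i \<in> carrier G" "\<And>w. w \<in> set S \<Longrightarrow> eval_word G s w = \<one>"
    by blast
  obtain n where n: "\<And>w i b. w \<in> set S \<Longrightarrow> Var i b \<in> set w \<Longrightarrow> i < n"
    using letter_vars_bounded[of S] by blast
  obtain hs where hs: "set hs = H"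
    using finite_list[OF assms(2)] by blast
  define N where "N = n + length hs"
  define e where "e i = (if i < n then s i else if i < N then hs ! (i - n) else \<one>)" for i
  have "range e \<subseteq> carrier G"
    using s(1) hs subgroup.subset[OF assms(1)] by (auto simp: e_def N_def)
  moreover have "H \<subseteq> e ` {..<N}"
  proof
    fix h assume "h \<in> H"
    then obtain j where "j < length hs" "h = hs ! j"
      unfolding hs[symmetric] in_set_conv_nth by blast
    then show "h \<in> e ` {..<N}"
      by (intro image_eqI[of _ _ "n + j"]) (auto simp: e_def N_def)
  qed
  ultimately interpret covered_subgroup G H e N
    using assms(1) by (simp add: covered_subgroup_def covered_subgroup_axioms_def is_group)
  obtain a where a: "H_specialization a"
    using exists_H_specialization[OF nonabelian laws_vanish_at_e_if_verbally_closed[OF verbal]]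
    by blast
  show "\<exists>f. (\<forall>i. f i \<in> H) \<and> (\<forall>w\<in>set S. eval_word G f w = \<one>)"
  proof (intro exI conjI ballI)
    show "\<forall>i. a i \<in> H"
      using H_specializationD(1)[OF a] by blast
  next
    fix w assume w: "w \<in> set S"
    show "eval_word G a w = \<one>"
    proof (rule eval_word_H_specialization[OF a])
      show "consts_of w \<subseteq> H"
        using coefficients w by blast
      show "i < N" if "Var i b \<in> set w" for i b
        using n[OF w that] by (simp add: N_def)
      have "eval_word G e w = eval_word G s w"
        using n[OF w] by (intro eval_word_cong) (auto simp: e_def)
      then show "eval_word G e w = \<one>"
        using s(2)[OF w] by simp
    qed
  qed
qed

lemma retract_if_satisfies_identities:
  assumes "subgroup H G" "finite (carrier G)"
    and nonabelian: "nonabelian_set G (monolith (G\<lparr>carrier := H\<rparr>))"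
    and identities: "satisfies_identities_of G (G\<lparr>carrier := H\<rparr>)"
  shows "retract H G"
proof -
  obtain xs where xs: "set xs = carrier G"
    using finite_list[OF assms(2)] by blast
  define e where "e i = (if i < length xs then xs ! i else \<one>)" for i
  have G_covered: "carrier G \<subseteq> e ` {..<length xs}"
  proof
    fix x assume "x \<in> carrier G"
    then obtain i where "i < length xs" "x = xs ! i"
      unfolding xs[symmetric] in_set_conv_nth by blast
    then show "x \<in> e ` {..<length xs}"
      by (intro image_eqI[of _ _ i]) (auto simp: e_def)
  qed
  have "range e \<subseteq> carrier G"
    using nth_mem[of _ xs] xs by (auto simp: e_def)
  moreover have "H \<subseteq> e ` {..<length xs}"
    using G_covered subgroup.subset[OF assms(1)] by blast
  ultimately interpret covered_subgroup G H e "length xs"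
    using assms(1) by (simp add: covered_subgroup_def covered_subgroup_axioms_def is_group)
  obtain a where "H_specialization a"
    using exists_H_specialization[OF nonabelian laws_vanish_at_e_if_satisfies_identities[OF identities]]
    by blast
  then show ?thesis
    using G_covered by (rule retract_H_specialization)
qed

end

theorem theorem1:
  fixes G :: "('a, 'm) monoid_scheme" and H :: "'a set"
  assumes "group G"
    and "subgroup H G"
    and "finite H"
    and "nonabelian_set G (monolith (subgrp G H))"
  shows "(verbally_closed H G \<longrightarrow> algebraically_closed H G)
       \<and> (finite (carrier G) \<and> satisfies_identities_of G (subgrp G H) \<longrightarrow> retract H G)"
  using group.algebraically_closed_if_verbally_closed[OF assms]
    group.retract_if_satisfies_identities[OF assms(1,2) _ assms(4)]
  by blast

end
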